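(* Consider the following one-step ($n=1$) scenario with two players. There is a single initial state ("cake"); the observation $O_1\in\{\text{red},\text{green}\}$, where player 1 believes $\mathbb P^1(\text{red})=0.9$, $\mathbb P^1(\text{green})=0.1$ and player 2 believes $\mathbb P^2(\text{red})=0.1$, $\mathbb P^2(\text{green})=0.9$. The action $A_1\in\{(\text{all},\text{none}),(\text{half},\text{half}),(\text{none},\text{all})\}$ determines the outcome, with utilities $U^1=30,20,0$ and $U^2=0,20,30$ respectively for these three actions (regardless of the observation). A policy $\pi$ assigns to each $o_1\in\{\text{red},\text{green}\}$ a distribution $\pi(\cdot\mid o_1)$ on the three actions; $\mathbb E^j[U^j;\pi]=\sum_{o_1}\mathbb P^j(o_1)\sum_{a}\pi(a\mid o_1)U^j(a)$, and for a distribution $\alpha$ on actions $\mathbb E^j[U^j\mid o_1;a_1\sim\alpha]=\sum_a\alpha(a)U^j(a)$. Let $\hat\pi$ be the policy with $\hat\pi(\cdot\mid\text{red})=100\%\,(\text{all},\text{none})$ and $\hat\pi(\cdot\mid\text{green})=100\%\,(\text{none},\text{all})$. Then $\hat\pi$ is not equal to any policy $\pi$ satisfying, for some fixed $r\in[0,1]$ and all $o_1$, \[ \pi(\cdot\mid o_1)\in\arg\max_{\alpha}\Big(r\,\mathbb E^1[U^1\mid o_1;a_1\sim\alpha]+(1-r)\,\mathbb E^2[U^2\mid o_1;a_1\sim\alpha]\Big), \] where the maximum ranges over distributions $\alpha$ on the three actions. Moreover, every such policy $\pi$ satisfies $\mathbb E^1[U^1;\pi]<\mathbb E^1[U^1;\hat\pi]$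 or $\mathbb E^2[U^2;\pi]<\mathbb E^2[U^2;\hat\pi]$.
   Context: Here $\mathbb P^j$ and $U^j$ denote player $j$'s beliefs and utility function; the machine's policy maps its observation to a (possibly randomized) action. (In this scenario $\mathbb E^1[U^1;\hat\pi]=\mathbb E^2[U^2;\hat\pi]=27$.) *)

theory Defs
  imports "HOL-Probability.Probability"
begin

datatype obs = Red | Green
datatype act = AllNone | HalfHalf | NoneAll
datatype player = P1 | P2

definition actions :: "act set" where "actions = {AllNone, HalfHalf, NoneAll}"
definition observations :: "obs set" where "observations = {Red, Green}"

fun belief :: "player \<Rightarrow> obs \<Rightarrow> real" where
  "belief P1 Red = 9/10" | "belief P1 Green = 1/10"
| "belief P2 Red = 1/10" | "belief P2 Green = 9/10"

fun U :: "player \<Rightarrow> act \<Rightarrow> real" where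
  "U P1 AllNone = 30" | "U P1 HalfHalf = 20" | "U P1 NoneAll = 0"
| "U P2 AllNone = 0" | "U P2 HalfHalf = 20" | "U P2 NoneAll = 30"

type_synonym policy = "obs \<Rightarrow> act pmf"

definition cond_EU :: "player \<Rightarrow> obs \<Rightarrow> act pmf \<Rightarrow> real" where
  "cond_EU j o1 \<alpha> = (\<Sum>a\<in>actions. pmf \<alpha> a * U j a)"

definition EU :: "player \<Rightarrow> policy \<Rightarrow> real" where
  "EU j \<pi> = (\<Sum>o1\<in>observations. belief j o1 * (\<Sum>a\<in>actions. pmf (\<pi> o1) a * U j a))"

definition pi_hat :: policy where
  "pi_hat o1 = (case o1 of Red \<Rightarrow> return_pmf AllNone | Green \<Rightarrow> return_pmf NoneAll)"

definition weighted_greedy :: "real \<Rightarrow> policy \<Rightarrow> bool" where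
  "weighted_greedy r \<pi> \<longleftrightarrow> (\<forall>o1. \<pi> o1 \<in>
     {\<alpha>. \<forall>\<beta>. r * cond_EU P1 o1 \<beta> + (1 - r) * cond_EU P2 o1 \<beta>
              \<le> r * cond_EU P1 o1 \<alpha> + (1 - r) * cond_EU P2 o1 \<alpha>})"

end

theory Submission
  imports Defs
begin

text \<open>For every real weight \<open>r\<close> the weighted payoffs of the three actions are \<open>30 r\<close>, \<open>20\<close>
  and \<open>30 (1 - r)\<close>, so the compromise action strictly beats one of the two extreme actions.
  A maximiser of an expected payoff puts no mass on strictly dominated actions, hence a weighted
  greedy policy never plays that extreme action, and the player who favours it gets at most 20,
  whereas \<open>pi_hat\<close> gives both players 27.\<close>

lemma pmf_eq_0_if_maximizes_expectation:
  fixes w :: "'a \<Rightarrow> real"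
  assumes "finite A" "set_pmf \<alpha> \<subseteq> A"
    and max: "\<forall>b\<in>A. w b \<le> (\<Sum>x\<in>A. pmf \<alpha> x * w x)"
    and "b \<in> A" "w a < w b"
  shows "pmf \<alpha> a = 0"
proof (rule ccontr)
  assume "pmf \<alpha> a \<noteq> 0"
  then have "a \<in> A" using assms(2) by (auto simp: set_pmf_eq)
  define M where "M = Max (w ` A)"
  have le_M: "w x \<le> M" if "x \<in> A" for x
    using assms(1) that by (simp add: M_def)
  have "M \<in> w ` A"
    unfolding M_def using assms(1,4) by (intro Max_in) auto
  then have "M \<le> (\<Sum>x\<in>A. pmf \<alpha> x * w x)" using max by auto
  moreover have "(\<Sum>x\<in>A. pmf \<alpha> x) = 1"
    using assms(1,2) by (simp add: sum_pmf_eq_1)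
  ultimately have "(\<Sum>x\<in>A. pmf \<alpha> x * (M - w x)) \<le> 0"
    by (simp add: right_diff_distrib sum_subtractf flip: sum_distrib_right)
  moreover have "pmf \<alpha> a * (M - w a) \<le> (\<Sum>x\<in>A. pmf \<alpha> x * (M - w x))"
    using \<open>a \<in> A\<close> assms(1) le_M by (intro member_le_sum) auto
  moreover have "0 < pmf \<alpha> a * (M - w a)"
    using \<open>pmf \<alpha> a \<noteq> 0\<close> le_M[OF assms(4)] assms(5) by (simp add: order_le_neq_trans)
  ultimately show False by linarith
qed

lemma actions_eq_UNIV: "actions = UNIV"
  unfolding actions_def using act.exhaust by auto

definition welfare :: "real \<Rightarrow> act \<Rightarrow> real" where
  "welfare r a = r * U P1 a + (1 - r) * U P2 a"

lemma weighted_cond_EU_eq: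
  "r * cond_EU P1 o1 \<alpha> + (1 - r) * cond_EU P2 o1 \<alpha> = (\<Sum>a\<in>actions. pmf \<alpha> a * welfare r a)"
  by (simp add: cond_EU_def welfare_def actions_def algebra_simps)

lemma cond_EU_return_pmf: "cond_EU j o1 (return_pmf b) = U j b"
  unfolding cond_EU_def actions_def by (cases b) (simp_all add: indicator_def)

lemma weighted_greedy_avoids_dominated:
  assumes "weighted_greedy r \<pi>" "welfare r a < welfare r b"
  shows "pmf (\<pi> o1) a = 0"
proof (rule pmf_eq_0_if_maximizes_expectation[where A = actions and w = "welfare r"])
  have "r * cond_EU P1 o1 (return_pmf c) + (1 - r) * cond_EU P2 o1 (return_pmf c)
      \<le> r * cond_EU P1 o1 (\<pi> o1) + (1 - r) * cond_EU P2 o1 (\<pi> o1)" for c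
    using assms(1) unfolding weighted_greedy_def by blast
  then show "\<forall>c\<in>actions. welfare r c \<le> (\<Sum>x\<in>actions. pmf (\<pi> o1) x * welfare r x)"
    by (simp add: cond_EU_return_pmf weighted_cond_EU_eq welfare_def)
  show "finite actions" by (simp add: actions_def)
  show "set_pmf (\<pi> o1) \<subseteq> actions" "b \<in> actions" by (simp_all add: actions_eq_UNIV)
qed (fact assms(2))

lemma compromise_dominates_an_extreme:
  "welfare r AllNone < welfare r HalfHalf \<or> welfare r NoneAll < welfare r HalfHalf"
  unfolding welfare_def by simp arith

lemma cond_EU_le_20:
  "pmf \<alpha> AllNone = 0 \<Longrightarrow> cond_EU P1 o1 \<alpha> \<le> 20"
  "pmf \<alpha> NoneAll = 0 \<Longrightarrow> cond_EU P2 o1 \<alpha> \<le> 20"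
  using pmf_le_1[of \<alpha> HalfHalf] by (simp_all add: cond_EU_def actions_def)

lemma belief_nonneg: "0 \<le> belief j o1"
  by (cases j; cases o1) simp_all

lemma EU_le_if_cond_EU_le:
  assumes "\<And>o1. cond_EU j o1 (\<pi> o1) \<le> c"
  shows "EU j \<pi> \<le> c"
proof -
  have "EU j \<pi> = belief j Red * cond_EU j Red (\<pi> Red) + belief j Green * cond_EU j Green (\<pi> Green)"
    by (simp add: EU_def cond_EU_def observations_def)
  also have "\<dots> \<le> belief j Red * c + belief j Green * c"
    using assms belief_nonneg by (intro add_mono mult_left_mono)
  also have "\<dots> = c"
    by (cases j) simp_all
  finally show ?thesis .
qed

lemma EU_pi_hat: "EU j pi_hat = 27"
  by (cases j) (simp_all add: EU_def pi_hat_def actions_def observations_def)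

theorem proposition2:
  shows "(\<forall>\<pi> r. 0 \<le> r \<and> r \<le> 1 \<and> weighted_greedy r \<pi> \<longrightarrow> \<pi> \<noteq> pi_hat)
       \<and> (\<forall>\<pi> r. 0 \<le> r \<and> r \<le> 1 \<and> weighted_greedy r \<pi> \<longrightarrow>
            EU P1 \<pi> < EU P1 pi_hat \<or> EU P2 \<pi> < EU P2 pi_hat)"
proof -
  have worse: "EU P1 \<pi> < EU P1 pi_hat \<or> EU P2 \<pi> < EU P2 pi_hat"
    if "weighted_greedy r \<pi>" for \<pi> r
  proof -
    have "EU P1 \<pi> \<le> 20 \<or> EU P2 \<pi> \<le> 20"
    proof (cases "welfare r AllNone < welfare r HalfHalf")
      case True
      then have "pmf (\<pi> o1) AllNone = 0" for o1
        by (rule weighted_greedy_avoids_dominated[OF that])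
      then show ?thesis by (simp add: EU_le_if_cond_EU_le cond_EU_le_20)
    next
      case False
      then have "pmf (\<pi> o1) NoneAll = 0" for o1
        using compromise_dominates_an_extreme weighted_greedy_avoids_dominated[OF that] by blast
      then show ?thesis by (simp add: EU_le_if_cond_EU_le cond_EU_le_20)
    qed
    then show ?thesis using EU_pi_hat[of P1] EU_pi_hat[of P2] by linarith
  qed
  moreover have "\<pi> \<noteq> pi_hat" if "weighted_greedy r \<pi>" for \<pi> r
    using worse[OF that] by auto
  ultimately show ?thesis by blast
qed

end
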